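(* Assume $\mathcal W$ and $\mathcal V$ are finite sets. Let $h_\star=\langle f_\star,g_\star\rangle$, $\hat h=\langle\hat f,\hat g\rangle$ with $f_\star,\hat f:\mathcal W\to\mathbb R^p$, $g_\star,\hat g:\mathcal V\to\mathbb R^p$, and let $\mathcal D_{\mathcal W,i}$, $\mathcal D_{\mathcal V,j}$ ($i,j\in\{1,2\}$) be distributions on $\mathcal W$, $\mathcal V$ with $\mathcal D_{i\otimes j}:=\mathcal D_{\mathcal W,i}\otimes\mathcal D_{\mathcal V,j}$. Suppose that for all $(i,j)\ne(2,2)$: $\mathcal R(\hat h;\mathcal D_{i\otimes j})\le\epsilon^2$ and $\mathbb E_{\mathcal D_{i\otimes j}}[h_\star(w,v)^2]\le M_\star^2$, and that $\epsilon<\sigma_\star/2$, where $\sigma_\star^2:=\sigma_p(\mathbb E_{\mathcal D_{\mathcal W,1}}[f_\star f_\star^\top])\,\sigma_p(\mathbb E_{\mathcal D_{\mathcal V,1}}[g_\star g_\star^\top])>0$. Then $\mathcal R(\hat h;\mathcal D_{2\otimes2})\le 64\,\epsilon^2\frac{M_\star^4}{\sigma_\star^4}$.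
   Context: For a scalar predictor $\hat h$ and distribution $\mathcal D$ on $\mathcal W\times\mathcal V$, $\mathcal R(\hat h;\mathcal D):=\mathbb E_{(w,v)\sim\mathcal D}[(h_\star(w,v)-\hat h(w,v))^2]$. $\sigma_p$ denotes the $p$-th largest singular value. *)

theory Defs
  imports "HOL-Analysis.Analysis"
begin

definition is_dist :: "('a::finite \<Rightarrow> real) \<Rightarrow> bool" where
  "is_dist d \<longleftrightarrow> (\<forall>x. 0 \<le> d x) \<and> (\<Sum>x\<in>UNIV. d x) = 1"

definition bilin :: "('w \<Rightarrow> real^'p) \<Rightarrow> ('v \<Rightarrow> real^'p) \<Rightarrow> 'w \<Rightarrow> 'v \<Rightarrow> real" where
  "bilin f g w v = f w \<bullet> g v"

definition prod_expect :: "('w::finite \<Rightarrow> real) \<Rightarrow> ('v::finite \<Rightarrow> real) \<Rightarrow> ('w \<Rightarrow> 'v \<Rightarrow> real) \<Rightarrow> real" where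
  "prod_expect dW dV F = (\<Sum>w\<in>UNIV. \<Sum>v\<in>UNIV. dW w * dV v * F w v)"

definition risk :: "('w::finite \<Rightarrow> 'v::finite \<Rightarrow> real) \<Rightarrow> ('w \<Rightarrow> 'v \<Rightarrow> real) \<Rightarrow> ('w \<Rightarrow> real) \<Rightarrow> ('v \<Rightarrow> real) \<Rightarrow> real" where
  "risk hstar hhat dW dV = prod_expect dW dV (\<lambda>w v. (hstar w v - hhat w v)^2)"

definition second_moment :: "('a::finite \<Rightarrow> real) \<Rightarrow> ('a \<Rightarrow> real^'p) \<Rightarrow> real^'p^'p" where
  "second_moment d f = (\<Sum>x\<in>UNIV. d x *\<^sub>R (\<chi> i j. f x $ i * f x $ j))"

text \<open>Smallest singular value of a square p x p matrix, i.e. sigma_p (the p-th largest):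
  min over unit vectors x of |A x|.\<close>
definition sigma_min :: "real^'p^'p \<Rightarrow> real" where
  "sigma_min A = Inf {norm (A *v x) | x. norm x = 1}"

end

theory Submission
  imports Defs
begin

text \<open>Let \<open>\<Sigma> = E\<^sub>d\<^sub>1[fs fs\<^sup>T]\<close> and \<open>H = E\<^sub>d\<^sub>1[fh fs\<^sup>T]\<close>, and write \<open>err w v = fs w \<bullet> gs v - fh w \<bullet> gh v\<close>.
  Averaging \<open>err\<close> over \<open>w \<sim> d1\<close> with weights \<open>fs w \<bullet> x\<close> shows that \<open>gh \<bullet> H x\<close> equals \<open>gs \<bullet> \<Sigma> x\<close> up to a
  residual whose \<open>L\<^sup>2(e1)\<close> and \<open>L\<^sup>2(e2)\<close> norms are at most \<open>\<epsilon> \<parallel>fs \<bullet> x\<parallel>\<^sub>d\<^sub>1\<close> (Cauchy--Schwarz against the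
  risks on \<open>d1 \<otimes> e1\<close> and \<open>d1 \<otimes> e2\<close>). The eigenvalue lower bounds make \<open>gs \<bullet> \<Sigma> x\<close> dominate this
  residual, so \<open>H\<close> is onto and \<open>\<parallel>gh \<bullet> z\<parallel>\<^sub>e\<^sub>2 \<le> K \<parallel>gh \<bullet> z\<parallel>\<^sub>e\<^sub>1\<close> for every \<open>z\<close>, with \<open>K = (M + \<epsilon>) / (\<sigma> - \<epsilon>)\<close>.
  Writing a row \<open>fs w\<close> as \<open>\<Sigma> x\<close>, \<open>err w\<close> is such a \<open>gh \<bullet> z\<close> plus a small residual, so \<open>\<parallel>err w\<parallel>\<^sub>e\<^sub>2\<close>
  is controlled by \<open>\<parallel>err w\<parallel>\<^sub>e\<^sub>1\<close>; averaging over \<open>w \<sim> d2\<close> and using the risk on \<open>d2 \<otimes> e1\<close> gives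
  \<open>sqrt (risk on d2 \<otimes> e2) \<le> 8 \<epsilon> M\<^sup>2 / \<sigma>\<^sup>2\<close>.\<close>

definition wnorm :: "('a::finite \<Rightarrow> real) \<Rightarrow> ('a \<Rightarrow> real) \<Rightarrow> real" where
  "wnorm d \<phi> = sqrt (\<Sum>x\<in>UNIV. d x * (\<phi> x)^2)"

text \<open>This embedding transports the triangle and Cauchy--Schwarz inequalities to \<open>wnorm\<close>.\<close>
definition weighted_vec :: "('a::finite \<Rightarrow> real) \<Rightarrow> ('a \<Rightarrow> real) \<Rightarrow> real^'a" where
  "weighted_vec d \<phi> = (\<chi> x. sqrt (d x) * \<phi> x)"

lemma norm_weighted_vec: "(\<And>x. 0 \<le> d x) \<Longrightarrow> norm (weighted_vec d \<phi>) = wnorm d \<phi>"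
  unfolding norm_vec_def L2_set_def wnorm_def weighted_vec_def by (simp add: power_mult_distrib)

lemma inner_weighted_vec:
  "(\<And>x. 0 \<le> d x) \<Longrightarrow> weighted_vec d \<phi> \<bullet> weighted_vec d \<psi> = (\<Sum>x\<in>UNIV. d x * \<phi> x * \<psi> x)"
  unfolding inner_vec_def weighted_vec_def
  by (rule sum.cong) (auto simp: real_sqrt_mult[symmetric])

lemma weighted_vec_add: "weighted_vec d (\<lambda>x. \<phi> x + \<psi> x) = weighted_vec d \<phi> + weighted_vec d \<psi>"
  and weighted_vec_diff: "weighted_vec d (\<lambda>x. \<phi> x - \<psi> x) = weighted_vec d \<phi> - weighted_vec d \<psi>"
  unfolding weighted_vec_def by (simp_all add: vec_eq_iff algebra_simps)

context
  fixes d :: "'a::finite \<Rightarrow> real"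
  assumes d_nonneg: "\<And>x. 0 \<le> d x"
begin

lemma wnorm_nonneg: "0 \<le> wnorm d \<phi>"
  unfolding wnorm_def using d_nonneg by (simp add: sum_nonneg)

lemma wnorm_power2: "(wnorm d \<phi>)^2 = (\<Sum>x\<in>UNIV. d x * (\<phi> x)^2)"
  unfolding wnorm_def using d_nonneg by (simp add: sum_nonneg)

lemma wnorm_le_iff: "0 \<le> B \<Longrightarrow> wnorm d \<phi> \<le> B \<longleftrightarrow> (\<Sum>x\<in>UNIV. d x * (\<phi> x)^2) \<le> B^2"
  by (metis wnorm_nonneg wnorm_power2 power2_le_imp_le power_mono)

lemma wnorm_triangle: "wnorm d (\<lambda>x. \<phi> x + \<psi> x) \<le> wnorm d \<phi> + wnorm d \<psi>"
  using norm_triangle_ineq[of "weighted_vec d \<phi>" "weighted_vec d \<psi>"]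
  by (simp add: norm_weighted_vec[OF d_nonneg] flip: weighted_vec_add)

lemma wnorm_diff_le: "wnorm d (\<lambda>x. \<phi> x - \<psi> x) \<le> wnorm d \<phi> + wnorm d \<psi>"
  using norm_triangle_ineq4[of "weighted_vec d \<phi>" "weighted_vec d \<psi>"]
  by (simp add: norm_weighted_vec[OF d_nonneg] flip: weighted_vec_diff)

lemma wnorm_diff_ge: "wnorm d \<phi> - wnorm d \<psi> \<le> wnorm d (\<lambda>x. \<phi> x - \<psi> x)"
  using norm_triangle_ineq2[of "weighted_vec d \<phi>" "weighted_vec d \<psi>"]
  by (simp add: norm_weighted_vec[OF d_nonneg] flip: weighted_vec_diff)

lemma wnorm_Cauchy_Schwarz: "\<bar>\<Sum>x\<in>UNIV. d x * \<phi> x * \<psi> x\<bar> \<le> wnorm d \<phi> * wnorm d \<psi>"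
  using Cauchy_Schwarz_ineq2[of "weighted_vec d \<phi>" "weighted_vec d \<psi>"]
  by (simp add: norm_weighted_vec[OF d_nonneg] inner_weighted_vec[OF d_nonneg])

lemma wnorm_mono: "(\<And>x. \<bar>\<phi> x\<bar> \<le> \<bar>\<psi> x\<bar>) \<Longrightarrow> wnorm d \<phi> \<le> wnorm d \<psi>"
  unfolding wnorm_def
  by (intro real_sqrt_le_mono sum_mono mult_left_mono) (auto simp: d_nonneg abs_le_square_iff)

lemma wnorm_scale: "wnorm d (\<lambda>x. c * \<phi> x) = \<bar>c\<bar> * wnorm d \<phi>"
proof -
  have "(\<Sum>x\<in>UNIV. d x * (c * \<phi> x)^2) = c^2 * (\<Sum>x\<in>UNIV. d x * (\<phi> x)^2)"
    by (simp add: sum_distrib_left power_mult_distrib algebra_simps)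
  then show ?thesis unfolding wnorm_def by (simp add: real_sqrt_mult)
qed

end

lemma wnorm_average_le:
  fixes d :: "'w::finite \<Rightarrow> real" and e :: "'v::finite \<Rightarrow> real"
  assumes d: "\<And>x. 0 \<le> d x" and e: "\<And>x. 0 \<le> e x"
  shows "wnorm e (\<lambda>v. \<Sum>w\<in>UNIV. d w * c w * D w v) \<le> wnorm d c * sqrt (prod_expect d e (\<lambda>w v. (D w v)^2))"
proof -
  let ?P = "prod_expect d e (\<lambda>w v. (D w v)^2)"
  have P: "0 \<le> ?P"
    unfolding prod_expect_def using d e by (intro sum_nonneg mult_nonneg_nonneg) auto
  have "(\<Sum>v\<in>UNIV. e v * (\<Sum>w\<in>UNIV. d w * c w * D w v)^2)
      \<le> (\<Sum>v\<in>UNIV. e v * ((wnorm d c)^2 * (wnorm d (\<lambda>w. D w v))^2))"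
  proof (intro sum_mono mult_left_mono)
    fix v
    have "\<bar>\<Sum>w\<in>UNIV. d w * c w * D w v\<bar> \<le> wnorm d c * wnorm d (\<lambda>w. D w v)"
      by (rule wnorm_Cauchy_Schwarz[OF d])
    from power_mono[OF this abs_ge_zero, where n = 2]
    show "(\<Sum>w\<in>UNIV. d w * c w * D w v)^2 \<le> (wnorm d c)^2 * (wnorm d (\<lambda>w. D w v))^2"
      by (simp add: power_mult_distrib)
  qed (rule e)
  also have "\<dots> = (wnorm d c)^2 * (\<Sum>v\<in>UNIV. \<Sum>w\<in>UNIV. e v * (d w * (D w v)^2))"
    by (simp add: wnorm_power2[OF d] sum_distrib_left mult.left_commute)
  also have "(\<Sum>v\<in>UNIV. \<Sum>w\<in>UNIV. e v * (d w * (D w v)^2)) = ?P"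
    unfolding prod_expect_def by (subst sum.swap) (simp add: mult.left_commute mult.assoc)
  finally have "(\<Sum>v\<in>UNIV. e v * (\<Sum>w\<in>UNIV. d w * c w * D w v)^2) \<le> (wnorm d c * sqrt ?P)^2"
    using P by (simp add: power_mult_distrib)
  moreover have "0 \<le> wnorm d c * sqrt ?P"
    using P by (simp add: wnorm_nonneg[OF d])
  ultimately show ?thesis
    using wnorm_le_iff[of e, OF e] by blast
qed

lemma risk_bilin_eq_wnorm:
  assumes "\<And>x. 0 \<le> d x" "\<And>x. 0 \<le> e x"
  shows "risk (bilin f g) (bilin f' g') d e = (wnorm d (\<lambda>w. wnorm e (\<lambda>v. f w \<bullet> g v - f' w \<bullet> g' v)))^2"
  unfolding risk_def prod_expect_def bilin_def wnorm_power2[OF assms(1)] wnorm_power2[OF assms(2)]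
  by (simp add: sum_distrib_left mult.assoc)

definition moment_map :: "('a::finite \<Rightarrow> real) \<Rightarrow> ('a \<Rightarrow> real^'p) \<Rightarrow> ('a \<Rightarrow> real^'p) \<Rightarrow> real^'p \<Rightarrow> real^'p" where
  "moment_map d f h x = (\<Sum>w\<in>UNIV. (d w * (f w \<bullet> x)) *\<^sub>R h w)"

lemma linear_moment_map: "linear (moment_map d f h)"
proof (rule linearI)
  show "moment_map d f h (x + y) = moment_map d f h x + moment_map d f h y" for x y
    by (simp add: moment_map_def inner_add_right distrib_left scaleR_add_left sum.distrib)
  show "moment_map d f h (c *\<^sub>R x) = c *\<^sub>R moment_map d f h x" for c x
    by (simp add: moment_map_def scaleR_sum_right mult.left_commute)
qed

lemma inner_moment_map: "y \<bullet> moment_map d f h x = (\<Sum>w\<in>UNIV. d w * (f w \<bullet> x) * (h w \<bullet> y))"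
  unfolding moment_map_def inner_sum_right by (simp add: inner_commute)

lemma second_moment_mult: "second_moment d f *v x = moment_map d f f x"
proof (subst vec_eq_iff, intro allI)
  fix i
  have "(second_moment d f *v x) $ i = (\<Sum>j\<in>UNIV. \<Sum>w\<in>UNIV. d w * (f w $ i * f w $ j) * x $ j)"
    by (simp add: matrix_vector_mult_def second_moment_def sum_distrib_right)
  also have "\<dots> = (\<Sum>w\<in>UNIV. \<Sum>j\<in>UNIV. d w * (f w $ i * f w $ j) * x $ j)"
    by (rule sum.swap)
  also have "\<dots> = moment_map d f f x $ i"
    by (simp add: moment_map_def inner_vec_def sum_distrib_left sum_distrib_right algebra_simps)
  finally show "(second_moment d f *v x) $ i = moment_map d f f x $ i" .
qed

lemma transpose_second_moment: "transpose (second_moment d f) = second_moment d f"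
  by (simp add: vec_eq_iff transpose_def second_moment_def mult.commute)

lemma second_moment_quadratic_form: "x \<bullet> (second_moment d f *v x) = (\<Sum>w\<in>UNIV. d w * (f w \<bullet> x)^2)"
  unfolding second_moment_mult inner_moment_map by (simp add: power2_eq_square mult.assoc)

lemma sigma_min_nonneg: "0 \<le> sigma_min (A::real^'n^'n)"
  unfolding sigma_min_def
  by (rule cInf_greatest) (auto intro!: exI[of _ "axis undefined 1"])

lemma sigma_min_le: "sigma_min A * norm x \<le> norm (A *v x)"
proof (cases "x = 0")
  case False
  then have nx: "norm x > 0" by simp
  have "sigma_min A \<le> norm (A *v ((1/norm x) *\<^sub>R x))"
    unfolding sigma_min_def
    by (rule cInf_lower) (use nx in \<open>auto intro!: exI[of _ "(1/norm x) *\<^sub>R x"] bdd_belowI[of _ 0]\<close>)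
  also have "\<dots> = norm (A *v x) / norm x" using nx by (simp add: matrix_vector_mult_scaleR)
  finally show ?thesis using nx by (simp add: field_simps)
qed simp

lemma nonneg_quadratic_imp_linear_coeff_zero:
  fixes \<alpha> \<beta> :: real
  assumes "\<And>t. 0 \<le> 2*t*\<alpha> + t^2*\<beta>"
  shows "\<alpha> = 0"
proof -
  define k where "k = \<bar>\<beta>\<bar> + 1"
  have k: "k > 0" unfolding k_def by simp
  have "0 \<le> 2*(-\<alpha>/k)*\<alpha> + (-\<alpha>/k)^2*\<beta>" by (rule assms)
  then have "0 \<le> k^2 * (2*(-\<alpha>/k)*\<alpha> + (-\<alpha>/k)^2*\<beta>)" using k by simp
  also have "\<dots> = \<alpha>^2*\<beta> - 2*\<alpha>^2*k"
    using k by (simp add: field_simps power2_eq_square)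
  also have "\<dots> \<le> \<alpha>^2*(k - 1) - 2*\<alpha>^2*k"
    using mult_left_mono[of \<beta> "k - 1" "\<alpha>^2"] unfolding k_def by simp
  finally have "\<alpha>^2 * (k + 1) \<le> 0" by (simp add: algebra_simps)
  with k show ?thesis by (simp add: mult_le_0_iff)
qed

text \<open>A minimiser \<open>u\<close> of the quadratic form on the unit sphere is an eigenvector: the
  first-order condition along every direction \<open>v\<close> forces \<open>A u - q(u) u \<bottom> v\<close>.\<close>
lemma symmetric_quadratic_form_min_eigenvector:
  fixes A :: "real^'n^'n"
  assumes sym: "transpose A = A"
  obtains u \<mu> where "norm u = 1" "A *v u = \<mu> *\<^sub>R u" "\<mu> = u \<bullet> (A *v u)"
    "\<And>x. \<mu> * (norm x)^2 \<le> x \<bullet> (A *v x)"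
proof -
  define q where "q = (\<lambda>x. x \<bullet> (A *v x))"
  have cont: "continuous_on (sphere 0 1) q"
    unfolding q_def by (intro continuous_intros linear_continuous_on matrix_vector_mul_linear)
      (simp add: linear_linear matrix_vector_mul_linear)
  obtain u where "u \<in> sphere 0 1" and umin: "\<And>y. y \<in> sphere 0 1 \<Longrightarrow> q u \<le> q y"
    using continuous_attains_inf[OF compact_sphere _ cont] by auto
  then have u: "norm u = 1" by simp
  define \<mu> where "\<mu> = q u"
  have qscale: "q (c *\<^sub>R y) = c^2 * q y" for c y
    unfolding q_def by (simp add: matrix_vector_mult_scaleR power2_eq_square)
  have low: "\<mu> * (norm y)^2 \<le> q y" for y
  proof (cases "y = 0")
    case False
    then have ny: "norm y > 0" by simp
    have "q u \<le> q ((1/norm y) *\<^sub>R y)" by (rule umin) (use ny in simp)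
    also have "\<dots> = q y / (norm y)^2" unfolding qscale by (simp add: field_simps)
    finally show ?thesis unfolding \<mu>_def using ny by (simp add: field_simps)
  qed (simp add: q_def)
  have Asym: "v \<bullet> (A *v u) = u \<bullet> (A *v v)" for v
    by (metis dot_lmul_matrix inner_commute sym transpose_matrix_vector)
  have "0 \<le> 2*t*(v \<bullet> (A *v u) - \<mu> * (u \<bullet> v)) + t^2*(q v - \<mu> * (norm v)^2)" for t v
  proof -
    have "q (u + t *\<^sub>R v) = q u + 2*t*(v \<bullet> (A *v u)) + t^2 * q v"
      unfolding q_def using Asym[of v]
      by (simp add: matrix_vector_right_distrib matrix_vector_mult_scaleR inner_add_left
          inner_add_right power2_eq_square algebra_simps)
    moreover have "(norm (u + t *\<^sub>R v))^2 = 1 + 2*t*(u \<bullet> v) + t^2 * (norm v)^2"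
      using u unfolding power2_norm_eq_inner norm_eq_1
      by (simp add: inner_add_left inner_add_right power2_eq_square algebra_simps inner_commute)
    ultimately show ?thesis using low[of "u + t *\<^sub>R v"] unfolding \<mu>_def by (simp add: algebra_simps)
  qed
  then have "(A *v u - \<mu> *\<^sub>R u) \<bullet> (A *v u) - \<mu> * (u \<bullet> (A *v u - \<mu> *\<^sub>R u)) = 0"
    by (rule nonneg_quadratic_imp_linear_coeff_zero)
  then have "(A *v u - \<mu> *\<^sub>R u) \<bullet> (A *v u - \<mu> *\<^sub>R u) = 0"
    by (simp add: inner_diff_left inner_diff_right algebra_simps inner_commute)
  then have "A *v u = \<mu> *\<^sub>R u" by simp
  moreover have "\<mu> = u \<bullet> (A *v u)" by (simp add: \<mu>_def q_def)
  moreover have "\<mu> * (norm x)^2 \<le> x \<bullet> (A *v x)" for x using low[of x] by (simp add: q_def)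
  ultimately show thesis using that u by blast
qed

lemma sigma_min_le_quadratic_form:
  fixes A :: "real^'n^'n"
  assumes "transpose A = A" and psd: "\<And>x. 0 \<le> x \<bullet> (A *v x)"
  shows "sigma_min A * (norm x)^2 \<le> x \<bullet> (A *v x)"
proof -
  obtain u \<mu> where u: "norm u = 1" and eig: "A *v u = \<mu> *\<^sub>R u" and "\<mu> = u \<bullet> (A *v u)"
    and low: "\<And>x. \<mu> * (norm x)^2 \<le> x \<bullet> (A *v x)"
    using symmetric_quadratic_form_min_eigenvector[OF assms(1)] by blast
  then have "0 \<le> \<mu>" using psd[of u] by simp
  have "sigma_min A \<le> norm (A *v u)"
    using sigma_min_le[of A u] u by simp
  also have "\<dots> = \<mu>" using eig u \<open>0 \<le> \<mu>\<close> by simp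
  finally have "sigma_min A \<le> \<mu>" .
  then have "sigma_min A * (norm x)^2 \<le> \<mu> * (norm x)^2" by (simp add: mult_right_mono)
  then show ?thesis using low[of x] by linarith
qed

lemma sigma_min_second_moment_le:
  assumes "\<And>x. 0 \<le> d x"
  shows "sigma_min (second_moment d f) * (norm x)^2 \<le> (\<Sum>w\<in>UNIV. d w * (f w \<bullet> x)^2)"
proof -
  have "0 \<le> y \<bullet> (second_moment d f *v y)" for y
    unfolding second_moment_quadratic_form using assms by (simp add: sum_nonneg)
  from sigma_min_le_quadratic_form[OF transpose_second_moment this] show ?thesis
    by (simp add: second_moment_quadratic_form)
qed

lemma wnorm_inner_le_second_moment:
  fixes f :: "'a::finite \<Rightarrow> real^'p"
  assumes d: "\<And>x. 0 \<le> d x" and a: "0 \<le> a" and low: "\<And>y. a * norm y \<le> norm (second_moment d f *v y)"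
  shows "sqrt a * wnorm d (\<lambda>w. f w \<bullet> x) \<le> norm (second_moment d f *v x)"
proof -
  let ?u = "second_moment d f *v x"
  have "a * (wnorm d (\<lambda>w. f w \<bullet> x))^2 = a * (x \<bullet> ?u)"
    by (simp add: wnorm_power2[OF d] second_moment_quadratic_form)
  also have "\<dots> \<le> (a * norm x) * norm ?u"
    using mult_left_mono[OF norm_cauchy_schwarz[of x ?u] a] by (simp add: mult.assoc)
  also have "\<dots> \<le> norm ?u * norm ?u"
    by (rule mult_right_mono[OF low norm_ge_zero])
  finally have "a * (wnorm d (\<lambda>w. f w \<bullet> x))^2 \<le> (norm ?u)^2"
    by (simp add: power2_eq_square)
  then have "(sqrt a * wnorm d (\<lambda>w. f w \<bullet> x))^2 \<le> (norm ?u)^2"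
    using a by (simp add: power_mult_distrib)
  then show ?thesis by (rule power2_le_imp_le) simp
qed

lemma inner_moment_map_residual:
  "g' v \<bullet> moment_map d f f' x
     = g v \<bullet> (second_moment d f *v x) - (\<Sum>w\<in>UNIV. d w * (f w \<bullet> x) * (f w \<bullet> g v - f' w \<bullet> g' v))"
  unfolding second_moment_mult inner_moment_map
  by (simp add: sum_subtractf[symmetric] algebra_simps inner_commute)

lemma extrapolation_factor_le:
  fixes \<epsilon> \<sigma> M :: real
  assumes \<epsilon>: "0 \<le> \<epsilon>" "\<epsilon> < \<sigma> / 2" and M: "\<sigma> \<le> M"
  defines "K \<equiv> (M + \<epsilon>) / (\<sigma> - \<epsilon>)"
  shows "(1 + K) * \<epsilon> * M / \<sigma> + K * \<epsilon> \<le> 8 * \<epsilon> * M^2 / \<sigma>^2"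
proof -
  have \<sigma>: "0 < \<sigma>" using \<epsilon> by linarith
  have "K \<le> (2*M + \<sigma>) / \<sigma>"
  proof -
    have "2*\<epsilon>*(\<sigma>+M) \<le> \<sigma>*(\<sigma>+M)" using \<epsilon> M \<sigma> by (intro mult_right_mono) auto
    then have "(M+\<epsilon>) * \<sigma> \<le> (2*M+\<sigma>) * (\<sigma>-\<epsilon>)" by (simp add: algebra_simps)
    then show ?thesis unfolding K_def using \<epsilon> \<sigma> by (simp add: field_simps)
  qed
  have "(1 + K) * \<epsilon> * M / \<sigma> + K * \<epsilon> = \<epsilon> * M / \<sigma> + K * (\<epsilon> * M / \<sigma> + \<epsilon>)"
    by (simp add: algebra_simps add_divide_distrib)
  also have "\<dots> \<le> \<epsilon> * M / \<sigma> + (2*M + \<sigma>) / \<sigma> * (\<epsilon> * M / \<sigma> + \<epsilon>)"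
    using \<open>K \<le> _\<close> \<epsilon> M \<sigma> by (intro add_left_mono mult_right_mono) auto
  also have "\<dots> = \<epsilon> * (2*M^2 + 4*M*\<sigma> + \<sigma>^2) / \<sigma>^2"
    using \<sigma> by (simp add: field_simps power2_eq_square)
  also have "\<dots> \<le> \<epsilon> * (8*M^2) / \<sigma>^2"
  proof -
    have "M*\<sigma> \<le> M*M" "\<sigma>*\<sigma> \<le> M*M" "0 \<le> M*M" using M \<sigma> by (simp_all add: mult_mono)
    then have "2*M^2 + 4*M*\<sigma> + \<sigma>^2 \<le> 8*M^2" unfolding power2_eq_square by linarith
    from mult_left_mono[OF this \<epsilon>(1)] show ?thesis by (rule divide_right_mono) simp
  qed
  finally show ?thesis by (simp add: ac_simps)
qed

lemma spread_le_prod_expect: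
  assumes d: "\<And>x. 0 \<le> d x" and spread: "\<And>y. c * (norm y)^2 \<le> (\<Sum>v\<in>UNIV. e v * (g v \<bullet> y)^2)"
  shows "c * (\<Sum>w\<in>UNIV. d w * (norm (f w))^2) \<le> prod_expect d e (\<lambda>w v. (bilin f g w v)^2)"
proof -
  have "c * (\<Sum>w\<in>UNIV. d w * (norm (f w))^2) = (\<Sum>w\<in>UNIV. d w * (c * (norm (f w))^2))"
    by (simp add: sum_distrib_left mult.left_commute)
  also have "\<dots> \<le> (\<Sum>w\<in>UNIV. d w * (\<Sum>v\<in>UNIV. e v * (g v \<bullet> f w)^2))"
    by (intro sum_mono mult_left_mono spread d)
  also have "\<dots> = prod_expect d e (\<lambda>w v. (bilin f g w v)^2)"
    by (simp add: prod_expect_def bilin_def sum_distrib_left mult.assoc inner_commute)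
  finally show ?thesis .
qed

lemma prod_expect_bilin_swap:
  "prod_expect e d (\<lambda>v w. (bilin g f v w)^2) = prod_expect d e (\<lambda>w v. (bilin f g w v)^2)"
  unfolding prod_expect_def bilin_def
  by (subst sum.swap) (simp add: inner_commute mult.commute)

text \<open>\<open>a\<close> and \<open>b\<close> bound the smallest eigenvalues of \<open>E\<^sub>d\<^sub>1[fs fs\<^sup>T]\<close> and \<open>E\<^sub>e\<^sub>1[gs gs\<^sup>T]\<close> from below,
  so \<open>sqrt (a * b)\<close> plays the role of \<open>\<sigma>\<^sub>\<star>\<close>.\<close>
locale bilinear_extrapolation =
  fixes fs fh :: "'w::finite \<Rightarrow> real^'p" and gs gh :: "'v::finite \<Rightarrow> real^'p"
    and d1 d2 :: "'w \<Rightarrow> real" and e1 e2 :: "'v \<Rightarrow> real" and a b M \<epsilon> :: real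
  assumes d1_nonneg: "\<And>w. 0 \<le> d1 w" and d2_nonneg: "\<And>w. 0 \<le> d2 w"
    and e1_nonneg: "\<And>v. 0 \<le> e1 v" and e2_nonneg: "\<And>v. 0 \<le> e2 v"
    and a_pos: "0 < a" and b_pos: "0 < b" and M_nonneg: "0 \<le> M"
    and fs_spread: "\<And>x. a * (norm x)^2 \<le> (\<Sum>w\<in>UNIV. d1 w * (fs w \<bullet> x)^2)"
    and gs_spread: "\<And>y. b * (norm y)^2 \<le> (\<Sum>v\<in>UNIV. e1 v * (gs v \<bullet> y)^2)"
    and moment_11: "prod_expect d1 e1 (\<lambda>w v. (bilin fs gs w v)^2) \<le> M^2"
    and moment_12: "prod_expect d1 e2 (\<lambda>w v. (bilin fs gs w v)^2) \<le> M^2"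
    and moment_21: "prod_expect d2 e1 (\<lambda>w v. (bilin fs gs w v)^2) \<le> M^2"
    and risk_11: "risk (bilin fs gs) (bilin fh gh) d1 e1 \<le> \<epsilon>^2"
    and risk_12: "risk (bilin fs gs) (bilin fh gh) d1 e2 \<le> \<epsilon>^2"
    and risk_21: "risk (bilin fs gs) (bilin fh gh) d2 e1 \<le> \<epsilon>^2"
    and eps_nonneg: "0 \<le> \<epsilon>" and eps_small: "\<epsilon> < sqrt (a * b) / 2"
begin

abbreviation \<sigma> :: real where "\<sigma> \<equiv> sqrt (a * b)"

abbreviation err :: "'w \<Rightarrow> 'v \<Rightarrow> real" where "err w v \<equiv> fs w \<bullet> gs v - fh w \<bullet> gh v"

abbreviation residual :: "real^'p \<Rightarrow> 'v \<Rightarrow> real" where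
  "residual x v \<equiv> \<Sum>w\<in>UNIV. d1 w * (fs w \<bullet> x) * err w v"

definition transfer_factor :: real where "transfer_factor = (M + \<epsilon>) / (\<sigma> - \<epsilon>)"

lemma sigma_pos: "0 < \<sigma>"
  using a_pos b_pos by simp

lemma sigma_minus_eps_pos: "0 < \<sigma> - \<epsilon>"
  using eps_nonneg eps_small by simp

lemma transfer_factor_nonneg: "0 \<le> transfer_factor"
  unfolding transfer_factor_def using M_nonneg eps_nonneg eps_small by simp

lemma moment_fs_2_le: "b * (\<Sum>w\<in>UNIV. d2 w * (norm (fs w))^2) \<le> M^2"
  using spread_le_prod_expect[where d = d2 and e = e1 and g = gs and c = b, OF d2_nonneg gs_spread] moment_21
  by (rule order_trans)

lemma moment_gs_2_le: "a * (\<Sum>v\<in>UNIV. e2 v * (norm (gs v))^2) \<le> M^2"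
  using spread_le_prod_expect[where d = e2 and e = d1 and g = fs and c = a and f = gs, OF e2_nonneg fs_spread]
    prod_expect_bilin_swap[where e = e2 and d = d1 and g = gs and f = fs] moment_12
  by linarith

lemma sigma_le_M: "\<sigma> \<le> M"
proof -
  define u :: "real^'p" where "u = axis undefined 1"
  have "a \<le> (\<Sum>w\<in>UNIV. d1 w * (fs w \<bullet> u)^2)"
    using fs_spread[of u] by (simp add: u_def)
  also have "\<dots> \<le> (\<Sum>w\<in>UNIV. d1 w * (norm (fs w))^2)"
  proof (intro sum_mono mult_left_mono)
    show "(fs w \<bullet> u)^2 \<le> (norm (fs w))^2" for w
      using Cauchy_Schwarz_ineq2[of "fs w" u] by (simp add: u_def flip: abs_le_square_iff)
  qed (rule d1_nonneg)
  finally have "b * a \<le> b * (\<Sum>w\<in>UNIV. d1 w * (norm (fs w))^2)"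
    using b_pos by simp
  also have "\<dots> \<le> M^2"
    using spread_le_prod_expect[where d = d1 and e = e1 and g = gs and c = b, OF d1_nonneg gs_spread] moment_11
    by (rule order_trans)
  finally have "sqrt (a * b) \<le> sqrt (M^2)"
    by (intro real_sqrt_le_mono) (simp add: mult.commute)
  then show ?thesis using M_nonneg by simp
qed

lemma norm_second_moment_fs_ge: "a * norm x \<le> norm (second_moment d1 fs *v x)"
proof -
  have "norm x * (a * norm x) \<le> x \<bullet> (second_moment d1 fs *v x)"
    using fs_spread[of x] by (simp add: second_moment_quadratic_form power2_eq_square ac_simps)
  also have "\<dots> \<le> norm x * norm (second_moment d1 fs *v x)" by (rule norm_cauchy_schwarz)
  finally show ?thesis by (cases "x = 0") simp_all
qed

lemma surj_second_moment_fs: "surj ((*v) (second_moment d1 fs))"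
proof -
  have "x = 0" if "second_moment d1 fs *v x = 0" for x
  proof -
    have "a * norm x \<le> 0" using norm_second_moment_fs_ge[of x] that by simp
    then show "x = 0" using a_pos by (simp add: mult_le_0_iff)
  qed
  then show ?thesis
    using linear_inj_imp_surj[OF matrix_vector_mul_linear] linear_injective_0[OF matrix_vector_mul_linear]
    by blast
qed

lemma wnorm_gs_1_ge: "sqrt b * norm y \<le> wnorm e1 (\<lambda>v. gs v \<bullet> y)"
proof (rule power2_le_imp_le)
  have "(sqrt b * norm y)^2 = b * (norm y)^2"
    using b_pos by (simp add: power_mult_distrib)
  also have "\<dots> \<le> (wnorm e1 (\<lambda>v. gs v \<bullet> y))^2"
    using gs_spread[of y] by (simp add: wnorm_power2[where d = e1, OF e1_nonneg])
  finally show "(sqrt b * norm y)^2 \<le> (wnorm e1 (\<lambda>v. gs v \<bullet> y))^2" .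
qed (rule wnorm_nonneg[where d = e1, OF e1_nonneg])

lemma wnorm_gs_2_le: "sqrt a * wnorm e2 (\<lambda>v. gs v \<bullet> y) \<le> M * norm y"
proof (rule power2_le_imp_le)
  have "(\<Sum>v\<in>UNIV. e2 v * (gs v \<bullet> y)^2) \<le> (\<Sum>v\<in>UNIV. e2 v * (norm (gs v))^2) * (norm y)^2"
    unfolding sum_distrib_right mult.assoc
  proof (intro sum_mono mult_left_mono)
    show "(gs v \<bullet> y)^2 \<le> (norm (gs v))^2 * (norm y)^2" for v
      using power_mono[OF Cauchy_Schwarz_ineq2[of "gs v" y] abs_ge_zero, where n = 2]
      by (simp add: power_mult_distrib)
  qed (rule e2_nonneg)
  then have "a * (\<Sum>v\<in>UNIV. e2 v * (gs v \<bullet> y)^2) \<le> a * (\<Sum>v\<in>UNIV. e2 v * (norm (gs v))^2) * (norm y)^2"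
    using a_pos by (simp add: mult.assoc)
  also have "\<dots> \<le> M^2 * (norm y)^2"
    by (rule mult_right_mono[OF moment_gs_2_le zero_le_power2])
  finally show "(sqrt a * wnorm e2 (\<lambda>v. gs v \<bullet> y))^2 \<le> (M * norm y)^2"
    using a_pos by (simp add: power_mult_distrib wnorm_power2[where d = e2, OF e2_nonneg])
qed (use M_nonneg in simp)

lemma residual_wnorm_le:
  assumes e: "\<And>v. 0 \<le> e v" and risk: "risk (bilin fs gs) (bilin fh gh) d1 e \<le> \<epsilon>^2"
  shows "wnorm e (\<lambda>v. \<Sum>w\<in>UNIV. d1 w * c w * err w v) \<le> wnorm d1 c * \<epsilon>"
proof -
  have "sqrt (prod_expect d1 e (\<lambda>w v. (err w v)^2)) \<le> \<epsilon>"
    using real_sqrt_le_mono[OF risk] eps_nonneg by (simp add: risk_def bilin_def)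
  with wnorm_average_le[where d = d1 and e = e and c = c and D = err, OF d1_nonneg e] show ?thesis
    using mult_left_mono[OF _ wnorm_nonneg[where d = d1, OF d1_nonneg]] by (meson order_trans)
qed

lemma sigma_wnorm_coeff_le:
  "\<sigma> * wnorm d1 (\<lambda>w. fs w \<bullet> x) \<le> wnorm e1 (\<lambda>v. gs v \<bullet> (second_moment d1 fs *v x))"
proof -
  have "\<sigma> * wnorm d1 (\<lambda>w. fs w \<bullet> x) = sqrt b * (sqrt a * wnorm d1 (\<lambda>w. fs w \<bullet> x))"
    by (simp add: real_sqrt_mult)
  also have "\<dots> \<le> sqrt b * norm (second_moment d1 fs *v x)"
    using mult_left_mono[OF wnorm_inner_le_second_moment[where d = d1, OF d1_nonneg _ norm_second_moment_fs_ge],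
        of "sqrt b"] a_pos b_pos
    by simp
  also have "\<dots> \<le> wnorm e1 (\<lambda>v. gs v \<bullet> (second_moment d1 fs *v x))"
    by (rule wnorm_gs_1_ge)
  finally show ?thesis .
qed

lemma sigma_wnorm_residual_le:
  assumes "\<And>v. 0 \<le> e v" "risk (bilin fs gs) (bilin fh gh) d1 e \<le> \<epsilon>^2"
  shows "\<sigma> * wnorm e (residual x) \<le> \<epsilon> * wnorm e1 (\<lambda>v. gs v \<bullet> (second_moment d1 fs *v x))"
proof -
  have "\<sigma> * wnorm e (residual x) \<le> \<sigma> * wnorm d1 (\<lambda>w. fs w \<bullet> x) * \<epsilon>"
    using mult_left_mono[OF residual_wnorm_le[OF assms] less_imp_le[OF sigma_pos]] by (simp add: mult.assoc)
  also have "\<dots> \<le> wnorm e1 (\<lambda>v. gs v \<bullet> (second_moment d1 fs *v x)) * \<epsilon>"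
    by (rule mult_right_mono[OF sigma_wnorm_coeff_le eps_nonneg])
  finally show ?thesis by (simp add: mult.commute)
qed

lemma wnorm_gh_moment_map_1_ge:
  "(\<sigma> - \<epsilon>) * wnorm e1 (\<lambda>v. gs v \<bullet> (second_moment d1 fs *v x))
     \<le> \<sigma> * wnorm e1 (\<lambda>v. gh v \<bullet> moment_map d1 fs fh x)"
proof -
  let ?t = "wnorm e1 (\<lambda>v. gs v \<bullet> (second_moment d1 fs *v x))"
  have "?t - wnorm e1 (residual x) \<le> wnorm e1 (\<lambda>v. gh v \<bullet> moment_map d1 fs fh x)"
    using wnorm_diff_ge[where d = e1, OF e1_nonneg] by (simp add: inner_moment_map_residual[where g = gs])
  from mult_left_mono[OF this less_imp_le[OF sigma_pos]]
  have "\<sigma> * ?t - \<sigma> * wnorm e1 (residual x) \<le> \<sigma> * wnorm e1 (\<lambda>v. gh v \<bullet> moment_map d1 fs fh x)"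
    by (simp add: right_diff_distrib)
  with sigma_wnorm_residual_le[where e = e1, OF e1_nonneg risk_11, of x] show ?thesis
    by (simp add: left_diff_distrib)
qed

lemma wnorm_gh_moment_map_2_le:
  "\<sigma> * wnorm e2 (\<lambda>v. gh v \<bullet> moment_map d1 fs fh x)
     \<le> (M + \<epsilon>) * wnorm e1 (\<lambda>v. gs v \<bullet> (second_moment d1 fs *v x))"
proof -
  let ?u = "second_moment d1 fs *v x"
  have "\<sigma> * wnorm e2 (\<lambda>v. gs v \<bullet> ?u) = sqrt b * (sqrt a * wnorm e2 (\<lambda>v. gs v \<bullet> ?u))"
    by (simp add: real_sqrt_mult)
  also have "\<dots> \<le> sqrt b * (M * norm ?u)"
    by (rule mult_left_mono[OF wnorm_gs_2_le]) (use b_pos in simp)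
  also have "\<dots> \<le> M * wnorm e1 (\<lambda>v. gs v \<bullet> ?u)"
    using mult_left_mono[OF wnorm_gs_1_ge M_nonneg] by (simp add: algebra_simps)
  finally have gs: "\<sigma> * wnorm e2 (\<lambda>v. gs v \<bullet> ?u) \<le> M * wnorm e1 (\<lambda>v. gs v \<bullet> ?u)" .
  have "wnorm e2 (\<lambda>v. gh v \<bullet> moment_map d1 fs fh x) \<le> wnorm e2 (\<lambda>v. gs v \<bullet> ?u) + wnorm e2 (residual x)"
    using wnorm_diff_le[where d = e2, OF e2_nonneg] by (simp add: inner_moment_map_residual[where g = gs])
  from mult_left_mono[OF this less_imp_le[OF sigma_pos]]
  have "\<sigma> * wnorm e2 (\<lambda>v. gh v \<bullet> moment_map d1 fs fh x)
      \<le> \<sigma> * wnorm e2 (\<lambda>v. gs v \<bullet> ?u) + \<sigma> * wnorm e2 (residual x)"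
    by (simp add: distrib_left)
  also have "\<dots> \<le> M * wnorm e1 (\<lambda>v. gs v \<bullet> ?u) + \<epsilon> * wnorm e1 (\<lambda>v. gs v \<bullet> ?u)"
    using gs sigma_wnorm_residual_le[where e = e2, OF e2_nonneg risk_12, of x] by (rule add_mono)
  finally show ?thesis by (simp only: distrib_right)
qed

lemma moment_map_surj: "surj (moment_map d1 fs fh)"
proof -
  have "x = 0" if "moment_map d1 fs fh x = 0" for x
  proof -
    let ?u = "second_moment d1 fs *v x"
    have "(\<sigma> - \<epsilon>) * wnorm e1 (\<lambda>v. gs v \<bullet> ?u) \<le> (\<sigma> - \<epsilon>) * 0"
      using wnorm_gh_moment_map_1_ge[of x] that by (simp add: wnorm_def)
    then have "wnorm e1 (\<lambda>v. gs v \<bullet> ?u) \<le> 0"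
      by (rule mult_left_le_imp_le[OF _ sigma_minus_eps_pos])
    then have "sqrt b * norm ?u \<le> 0" using wnorm_gs_1_ge[of ?u] by linarith
    then have "a * norm x \<le> 0"
      using norm_second_moment_fs_ge[of x] b_pos by (simp add: mult_le_0_iff)
    then show "x = 0" using a_pos by (simp add: mult_le_0_iff)
  qed
  then show ?thesis
    using linear_inj_imp_surj[OF linear_moment_map] linear_injective_0[OF linear_moment_map] by blast
qed

lemma wnorm_gh_2_le: "wnorm e2 (\<lambda>v. gh v \<bullet> z) \<le> transfer_factor * wnorm e1 (\<lambda>v. gh v \<bullet> z)"
proof -
  obtain x where z: "z = moment_map d1 fs fh x"
    using moment_map_surj by (metis surjD)
  define t where "t = wnorm e1 (\<lambda>v. gs v \<bullet> (second_moment d1 fs *v x))"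
  define W\<^sub>1 where "W\<^sub>1 = wnorm e1 (\<lambda>v. gh v \<bullet> z)"
  define W\<^sub>2 where "W\<^sub>2 = wnorm e2 (\<lambda>v. gh v \<bullet> z)"
  have up: "\<sigma> * W\<^sub>2 \<le> (M + \<epsilon>) * t"
    using wnorm_gh_moment_map_2_le[of x] unfolding z t_def W\<^sub>2_def .
  have low: "(\<sigma> - \<epsilon>) * t \<le> \<sigma> * W\<^sub>1"
    using wnorm_gh_moment_map_1_ge[of x] unfolding z t_def W\<^sub>1_def .
  have "\<sigma> * ((\<sigma> - \<epsilon>) * W\<^sub>2) = (\<sigma> - \<epsilon>) * (\<sigma> * W\<^sub>2)" by (simp add: ac_simps)
  also have "\<dots> \<le> (\<sigma> - \<epsilon>) * ((M + \<epsilon>) * t)"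
    by (rule mult_left_mono[OF up]) (use sigma_minus_eps_pos in simp)
  also have "\<dots> = (M + \<epsilon>) * ((\<sigma> - \<epsilon>) * t)" by (simp add: ac_simps)
  also have "\<dots> \<le> (M + \<epsilon>) * (\<sigma> * W\<^sub>1)"
    by (rule mult_left_mono[OF low]) (use M_nonneg eps_nonneg in simp)
  also have "\<dots> = \<sigma> * ((M + \<epsilon>) * W\<^sub>1)" by (simp add: ac_simps)
  finally have "(\<sigma> - \<epsilon>) * W\<^sub>2 \<le> (M + \<epsilon>) * W\<^sub>1"
    by (rule mult_left_le_imp_le[OF _ sigma_pos])
  then show ?thesis
    unfolding transfer_factor_def W\<^sub>1_def W\<^sub>2_def using sigma_minus_eps_pos by (simp add: field_simps)
qed

lemma wnorm_err_row_2_le: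
  "wnorm e2 (err w) \<le> (1 + transfer_factor) * \<epsilon> * (norm (fs w) / sqrt a) + transfer_factor * wnorm e1 (err w)"
proof -
  obtain x where x: "fs w = second_moment d1 fs *v x"
    using surj_second_moment_fs by (metis surjD)
  define C where "C = wnorm d1 (\<lambda>w'. fs w' \<bullet> x)"
  define z where "z = moment_map d1 fs fh x - fh w"
  have C: "C \<le> norm (fs w) / sqrt a"
    using wnorm_inner_le_second_moment[where d = d1, OF d1_nonneg _ norm_second_moment_fs_ge, of x] a_pos
    unfolding C_def x by (simp add: field_simps)
  have err_eq: "err w v = residual x v + gh v \<bullet> z" for v
    using inner_moment_map_residual[of gh v d1 fs fh x gs]
    unfolding z_def x by (simp add: inner_diff_right inner_commute)
  have res\<^sub>1: "wnorm e1 (residual x) \<le> C * \<epsilon>" and res\<^sub>2: "wnorm e2 (residual x) \<le> C * \<epsilon>"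
    unfolding C_def
    by (rule residual_wnorm_le[where e = e1, OF e1_nonneg risk_11],
        rule residual_wnorm_le[where e = e2, OF e2_nonneg risk_12])
  have "wnorm e1 (\<lambda>v. gh v \<bullet> z) \<le> wnorm e1 (err w) + C * \<epsilon>"
    using wnorm_diff_le[where d = e1, OF e1_nonneg, of "err w" "residual x"] res\<^sub>1 by (simp add: err_eq)
  then have "wnorm e2 (\<lambda>v. gh v \<bullet> z) \<le> transfer_factor * (wnorm e1 (err w) + C * \<epsilon>)"
    using wnorm_gh_2_le[of z] mult_left_mono transfer_factor_nonneg by (meson order_trans)
  moreover have "wnorm e2 (err w) \<le> wnorm e2 (residual x) + wnorm e2 (\<lambda>v. gh v \<bullet> z)"
    using wnorm_triangle[where d = e2, OF e2_nonneg, of "residual x" "\<lambda>v. gh v \<bullet> z"] by (simp add: err_eq)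
  ultimately have "wnorm e2 (err w) \<le> (1 + transfer_factor) * \<epsilon> * C + transfer_factor * wnorm e1 (err w)"
    using res\<^sub>2 by (simp add: algebra_simps)
  also have "\<dots> \<le> (1 + transfer_factor) * \<epsilon> * (norm (fs w) / sqrt a) + transfer_factor * wnorm e1 (err w)"
    using mult_left_mono[OF C, of "(1 + transfer_factor) * \<epsilon>"] transfer_factor_nonneg eps_nonneg by simp
  finally show ?thesis .
qed

lemma wnorm_err_22_le:
  "wnorm d2 (\<lambda>w. wnorm e2 (err w)) \<le> (1 + transfer_factor) * \<epsilon> * M / \<sigma> + transfer_factor * \<epsilon>"
proof -
  define A where "A = (1 + transfer_factor) * \<epsilon> / sqrt a"
  define K where "K = transfer_factor"
  have A: "0 \<le> A" and K: "0 \<le> K"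
    unfolding A_def K_def using transfer_factor_nonneg eps_nonneg a_pos
    by (auto intro!: divide_nonneg_nonneg mult_nonneg_nonneg)
  have "(\<Sum>w\<in>UNIV. d2 w * (norm (fs w))^2) \<le> M^2 / b"
    using moment_fs_2_le b_pos by (simp add: field_simps)
  then have fs_2: "wnorm d2 (\<lambda>w. norm (fs w)) \<le> M / sqrt b"
    unfolding wnorm_def using M_nonneg by (metis real_sqrt_abs real_sqrt_divide real_sqrt_le_mono abs_of_nonneg)
  have "(wnorm d2 (\<lambda>w. wnorm e1 (err w)))^2 \<le> \<epsilon>^2"
    using risk_21 by (simp add: risk_bilin_eq_wnorm[where d = d2 and e = e1, OF d2_nonneg e1_nonneg])
  then have err_21: "wnorm d2 (\<lambda>w. wnorm e1 (err w)) \<le> \<epsilon>"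
    by (rule power2_le_imp_le[OF _ eps_nonneg])
  have "wnorm d2 (\<lambda>w. wnorm e2 (err w)) \<le> wnorm d2 (\<lambda>w. A * norm (fs w) + K * wnorm e1 (err w))"
  proof (rule wnorm_mono[where d = d2, OF d2_nonneg])
    fix w
    have "0 \<le> wnorm e2 (err w)" by (rule wnorm_nonneg[where d = e2, OF e2_nonneg])
    moreover have "wnorm e2 (err w) \<le> A * norm (fs w) + K * wnorm e1 (err w)"
      using wnorm_err_row_2_le[of w] by (simp add: A_def K_def ac_simps)
    ultimately show "\<bar>wnorm e2 (err w)\<bar> \<le> \<bar>A * norm (fs w) + K * wnorm e1 (err w)\<bar>" by linarith
  qed
  also have "\<dots> \<le> wnorm d2 (\<lambda>w. A * norm (fs w)) + wnorm d2 (\<lambda>w. K * wnorm e1 (err w))"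
    by (rule wnorm_triangle[where d = d2, OF d2_nonneg])
  also have "\<dots> = A * wnorm d2 (\<lambda>w. norm (fs w)) + K * wnorm d2 (\<lambda>w. wnorm e1 (err w))"
    using A K by (simp add: wnorm_scale[where d = d2, OF d2_nonneg])
  also have "\<dots> \<le> A * (M / sqrt b) + K * \<epsilon>"
    by (intro add_mono mult_left_mono fs_2 err_21 A K)
  also have "A * (M / sqrt b) = (1 + transfer_factor) * \<epsilon> * M / \<sigma>"
    unfolding A_def by (simp add: real_sqrt_mult)
  finally show ?thesis unfolding K_def .
qed

lemma risk_22_le: "risk (bilin fs gs) (bilin fh gh) d2 e2 \<le> 64 * \<epsilon>^2 * M^4 / (a * b)^2"
proof -
  let ?S = "wnorm d2 (\<lambda>w. wnorm e2 (err w))"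
  have S: "?S \<le> 8 * \<epsilon> * M^2 / \<sigma>^2"
    using wnorm_err_22_le extrapolation_factor_le[OF eps_nonneg eps_small sigma_le_M]
    unfolding transfer_factor_def by linarith
  have "risk (bilin fs gs) (bilin fh gh) d2 e2 = ?S^2"
    by (rule risk_bilin_eq_wnorm[where d = d2 and e = e2, OF d2_nonneg e2_nonneg])
  also have "\<dots> \<le> (8 * \<epsilon> * M^2 / \<sigma>^2)^2"
    by (rule power_mono[OF S wnorm_nonneg[where d = d2, OF d2_nonneg]])
  also have "\<sigma>^2 = a * b" using a_pos b_pos by simp
  finally show ?thesis by (simp add: power_divide power_mult_distrib flip: power_mult)
qed

end

theorem mainTheorem5:
  fixes fs fh :: "'w::finite \<Rightarrow> real^'p"
    and gs gh :: "'v::finite \<Rightarrow> real^'p"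
    and dW :: "nat \<Rightarrow> 'w \<Rightarrow> real"
    and dV :: "nat \<Rightarrow> 'v \<Rightarrow> real"
    and \<epsilon> Ms :: real
  assumes dW: "\<And>i. i \<in> {1,2} \<Longrightarrow> is_dist (dW i)"
    and dV: "\<And>j. j \<in> {1,2} \<Longrightarrow> is_dist (dV j)"
    and eps_nonneg: "0 \<le> \<epsilon>"
    and risk_bound: "\<And>i j. i \<in> {1,2} \<Longrightarrow> j \<in> {1,2} \<Longrightarrow> (i, j) \<noteq> (2, 2) \<Longrightarrow>
        risk (bilin fs gs) (bilin fh gh) (dW i) (dV j) \<le> \<epsilon>^2"
    and moment_bound: "\<And>i j. i \<in> {1,2} \<Longrightarrow> j \<in> {1,2} \<Longrightarrow> (i, j) \<noteq> (2, 2) \<Longrightarrow>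
        prod_expect (dW i) (dV j) (\<lambda>w v. (bilin fs gs w v)^2) \<le> Ms^2"
    and sigma_pos: "sigma_min (second_moment (dW 1) fs) * sigma_min (second_moment (dV 1) gs) > 0"
    and eps_small: "\<epsilon> < sqrt (sigma_min (second_moment (dW 1) fs) * sigma_min (second_moment (dV 1) gs)) / 2"
  shows "risk (bilin fs gs) (bilin fh gh) (dW 2) (dV 2)
     \<le> 64 * \<epsilon>^2 * Ms^4 / (sigma_min (second_moment (dW 1) fs) * sigma_min (second_moment (dV 1) gs))^2"
proof -
  define a where "a = sigma_min (second_moment (dW 1) fs)"
  define b where "b = sigma_min (second_moment (dV 1) gs)"
  have "0 < a" "0 < b"
    using sigma_pos sigma_min_nonneg[of "second_moment (dW 1) fs"] sigma_min_nonneg[of "second_moment (dV 1) gs"]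
    unfolding a_def b_def by (simp_all add: zero_less_mult_iff)
  moreover have dW1: "\<And>w. 0 \<le> dW 1 w" and "\<And>w. 0 \<le> dW 2 w"
    and dV1: "\<And>v. 0 \<le> dV 1 v" and "\<And>v. 0 \<le> dV 2 v"
    using dW dV by (simp_all add: is_dist_def)
  moreover note sigma_min_second_moment_le[where d = "dW 1", OF dW1, of fs]
    sigma_min_second_moment_le[where d = "dV 1", OF dV1, of gs]
  ultimately interpret bilinear_extrapolation fs fh gs gh "dW 1" "dW 2" "dV 1" "dV 2" a b "\<bar>Ms\<bar>" \<epsilon>
    using risk_bound moment_bound eps_nonneg eps_small by unfold_locales (simp_all add: a_def b_def)
  show ?thesis using risk_22_le by (simp add: a_def b_def)
qed
end
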